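(* For a given policy $\pi$ and goal $s_g$, the Wasserstein distance of the state visitation measure of $\pi$ from the goal distribution $\rho_g=\delta(s_g)$ under the ground metric $d^\pi_T$ can be written as $$W_1^\pi(\rho_\pi,\rho_g)=\mathop{\mathbb{E}}_{s_0\sim\rho_0}\left[h\big(d^\pi_T(s_0,s_g)\big)+\frac{\gamma}{1-\gamma}\big(\Delta^\pi_{\text{Jensen}}(s_0)-1\big)\right],$$ where $h$ is an increasing function of $d^\pi_T$.
   Context: A goal-conditioned MDP has discrete state space $\mathcal{S}$, discrete actions, goal-dependent transitions $P(\cdot\mid s,a,s_g)$, start-state distribution $\rho_0$, and discount $\gamma\in[0,1)$; reward is $\mathbb{I}[s_{t+1}=s_g]$ and the episode enters an absorbing zero-reward state after reaching $s_g$. For a policy $\pi$, $T(s_g\mid\pi,s)$ is the first time-step at which $s_g$ is encountered starting from $s$ and following $\pi$; $d^\pi_T(s,s_g):=\mathbb{E}[T(s_g\mid\pi,s)]$ is the time-step quasimetric, and $V^\pi(s\mid s_g)=\mathbb{E}[\gamma^{T(s_g\mid\pi,s)}]$. The Jensen gap is $\Delta^\pi_{\text{Jensen}}(s):=V^\pi(s\mid s_g)-\gamma^{d^\pi_T(s,s_g)}$. The goal-conditioned state visitation distribution is $\rho_\pi(s\mid s_g)=\mathbb{E}_{s_0\sim\rho_0}\big[(1-\gamma)\sum_{t=0}^\infty\gamma^t P(s_t=s\mid\pi,s_g)\big]$, and $\rho_g=\delta(s_g)$ is the Dirac measure at the goal. The Wasserstein-1 distance under ground quasimetric $d^\pi_T$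 is $W_1^\pi(\rho_\pi,\rho_g)=\sum_{s\in\mathcal{S}}\rho_\pi(s\mid s_g)\,d^\pi_T(s,s_g)$. *)

theory Defs
  imports "HOL-Probability.Probability"
begin

text \<open>Once the goal sg is reached the episode is absorbed there (zero reward
  afterwards), so the induced state chain stays at sg.\<close>

definition pol_kernel ::
  "('s \<Rightarrow> 'a \<Rightarrow> 's \<Rightarrow> 's pmf) \<Rightarrow> ('s \<Rightarrow> 's \<Rightarrow> 'a pmf) \<Rightarrow> 's \<Rightarrow> 's \<Rightarrow> 's pmf" where
  "pol_kernel P pol sg s =
     (if s = sg then return_pmf sg else bind_pmf (pol s sg) (\<lambda>a. P s a sg))"

text \<open>first_hit_prob P pol sg s n = Prob[ T(sg | pol, s) = n ], the probability that
  the goal is first encountered at time step n when starting from s.\<close>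
fun first_hit_prob ::
  "('s::finite \<Rightarrow> 'a \<Rightarrow> 's \<Rightarrow> 's pmf) \<Rightarrow> ('s \<Rightarrow> 's \<Rightarrow> 'a pmf) \<Rightarrow> 's \<Rightarrow> 's \<Rightarrow> nat \<Rightarrow> real" where
  "first_hit_prob P pol sg s 0 = (if s = sg then 1 else 0)"
| "first_hit_prob P pol sg s (Suc n) =
     (if s = sg then 0
      else (\<Sum>s'\<in>UNIV. pmf (pol_kernel P pol sg s) s' * first_hit_prob P pol sg s' n))"

fun state_prob ::
  "('s::finite \<Rightarrow> 'a \<Rightarrow> 's \<Rightarrow> 's pmf) \<Rightarrow> ('s \<Rightarrow> 's \<Rightarrow> 'a pmf) \<Rightarrow> 's \<Rightarrow> nat \<Rightarrow> 's \<Rightarrow> 's \<Rightarrow> real" where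
  "state_prob P pol sg 0 s0 s = (if s = s0 then 1 else 0)"
| "state_prob P pol sg (Suc t) s0 s =
     (\<Sum>s'\<in>UNIV. state_prob P pol sg t s0 s' * pmf (pol_kernel P pol sg s') s)"

definition dT ::
  "('s::finite \<Rightarrow> 'a \<Rightarrow> 's \<Rightarrow> 's pmf) \<Rightarrow> ('s \<Rightarrow> 's \<Rightarrow> 'a pmf) \<Rightarrow> 's \<Rightarrow> 's \<Rightarrow> real" where
  "dT P pol sg s = (\<Sum>n. real n * first_hit_prob P pol sg s n)"

definition Vfun ::
  "real \<Rightarrow> ('s::finite \<Rightarrow> 'a \<Rightarrow> 's \<Rightarrow> 's pmf) \<Rightarrow> ('s \<Rightarrow> 's \<Rightarrow> 'a pmf) \<Rightarrow> 's \<Rightarrow> 's \<Rightarrow> real" where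
  "Vfun \<gamma> P pol sg s = (\<Sum>n. \<gamma> ^ n * first_hit_prob P pol sg s n)"

definition jensen_gap ::
  "real \<Rightarrow> ('s::finite \<Rightarrow> 'a \<Rightarrow> 's \<Rightarrow> 's pmf) \<Rightarrow> ('s \<Rightarrow> 's \<Rightarrow> 'a pmf) \<Rightarrow> 's \<Rightarrow> 's \<Rightarrow> real" where
  "jensen_gap \<gamma> P pol sg s = Vfun \<gamma> P pol sg s - \<gamma> powr dT P pol sg s"

definition visitation ::
  "real \<Rightarrow> ('s::finite \<Rightarrow> 'a \<Rightarrow> 's \<Rightarrow> 's pmf) \<Rightarrow> ('s \<Rightarrow> 's \<Rightarrow> 'a pmf) \<Rightarrow> 's pmf \<Rightarrow> 's \<Rightarrow> 's \<Rightarrow> real" where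
  "visitation \<gamma> P pol rho0 sg s =
     (\<Sum>s0\<in>UNIV. pmf rho0 s0 * ((1 - \<gamma>) * (\<Sum>t. \<gamma> ^ t * state_prob P pol sg t s0 s)))"

text \<open>W_1^pol(rho_pi, delta(sg)) = sum_s rho_pi(s | sg) * d^pi_T(s, sg).\<close>
definition W1 ::
  "real \<Rightarrow> ('s::finite \<Rightarrow> 'a \<Rightarrow> 's \<Rightarrow> 's pmf) \<Rightarrow> ('s \<Rightarrow> 's \<Rightarrow> 'a pmf) \<Rightarrow> 's pmf \<Rightarrow> 's \<Rightarrow> real" where
  "W1 \<gamma> P pol rho0 sg = (\<Sum>s\<in>UNIV. visitation \<gamma> P pol rho0 sg s * dT P pol sg s)"

end

(* With c = gamma / (1 - gamma), the function g = d_T + c (V - 1) solves the Bellman equation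
   g = (1 - gamma) d_T + gamma K g of the goal-absorbed chain K: away from the goal, first-step
   analysis of the hitting time gives d_T = 1 + K d_T and V = gamma K V, and the constants cancel
   because gamma (1 + c) = c; at the goal d_T = 0 and V = 1, so g = 0. Unrolling the Bellman
   equation (the remainder gamma^N E[g(s_N)] vanishes) shows that g(s0) is the discounted
   occupancy average of (1 - gamma) d_T, i.e. the contribution of s0 to W_1. Finally
   g = h(d_T) + c (Jensen gap - 1) with h(x) = x + c gamma^x, and h is strictly increasing on
   [0, oo) since h'(x) = 1 + c gamma^x ln gamma >= 1 + c ln gamma > 0, the last inequality being
   ln (1/gamma) < 1/gamma - 1. *)

theory Submission
  imports Defs
begin

lemma strict_mono_on_add_scaled_powr:
  fixes \<gamma> :: real
  assumes "0 \<le> \<gamma>" "\<gamma> < 1"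
  shows "strict_mono_on {0..} (\<lambda>x. x + \<gamma> / (1 - \<gamma>) * \<gamma> powr x)"
proof (cases "\<gamma> = 0")
  case True
  then show ?thesis by (auto simp: strict_mono_on_def)
next
  case False
  with assms have \<gamma>: "0 < \<gamma>" "\<gamma> < 1" by auto
  define c where "c = \<gamma> / (1 - \<gamma>)"
  have "ln (1 / \<gamma>) < 1 / \<gamma> - 1"
    using ln_le_minus_one[of "1 / \<gamma>"] ln_eq_minus_one[of "1 / \<gamma>"] \<gamma> by force
  then have slope_at_0: "0 < 1 + c * ln \<gamma>"
    using \<gamma> by (simp add: c_def ln_div field_simps)
  have slope: "0 < 1 + c * (\<gamma> powr x * ln \<gamma>)" if "0 \<le> x" for x
  proof -
    have "c * ln \<gamma> \<le> 0" "\<gamma> powr x \<le> 1"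
      using \<gamma> that by (auto simp: c_def divide_nonpos_pos mult_nonneg_nonpos powr_le1)
    then have "c * ln \<gamma> * (1 - \<gamma> powr x) \<le> 0"
      by (simp add: mult_nonpos_nonneg)
    then show ?thesis using slope_at_0 by (simp add: algebra_simps)
  qed
  have deriv: "DERIV (\<lambda>x. x + c * \<gamma> powr x) x :> 1 + c * (\<gamma> powr x * ln \<gamma>)" for x
    using DERIV_add[OF DERIV_ident DERIV_cmult[OF has_real_derivative_const_powr[OF DERIV_ident]]]
    by (simp add: mult_ac)
  show ?thesis unfolding c_def[symmetric]
  proof (rule strict_mono_onI)
    fix x y :: real assume "x \<in> {0..}" "y \<in> {0..}" "x < y"
    then show "x + c * \<gamma> powr x < y + c * \<gamma> powr y"
      using deriv slope by (intro DERIV_pos_imp_increasing[OF \<open>x < y\<close>]) fastforce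
  qed
qed

context
  fixes P :: "'s::finite \<Rightarrow> 'a \<Rightarrow> 's \<Rightarrow> 's pmf" and pol :: "'s \<Rightarrow> 's \<Rightarrow> 'a pmf" and sg :: 's
begin

abbreviation K :: "'s \<Rightarrow> 's \<Rightarrow> real" where
  "K s s' \<equiv> pmf (pol_kernel P pol sg s) s'"

abbreviation hit :: "'s \<Rightarrow> nat \<Rightarrow> real" where
  "hit s n \<equiv> first_hit_prob P pol sg s n"

abbreviation state :: "nat \<Rightarrow> 's \<Rightarrow> 's \<Rightarrow> real" where
  "state t s0 s \<equiv> state_prob P pol sg t s0 s"

lemma pol_kernel_goal: "K sg s = (if s = sg then 1 else 0)"
  by (simp add: pol_kernel_def)

lemma sum_pol_kernel: "(\<Sum>s'\<in>UNIV. K s s') = 1"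
  by (rule sum_pmf_eq_1) auto

lemma first_hit_prob_nonneg: "0 \<le> hit s n"
  by (induction n arbitrary: s) (auto intro!: sum_nonneg)

lemma state_prob_nonneg: "0 \<le> state t s0 s"
  by (induction t arbitrary: s) (auto intro!: sum_nonneg)

lemma sum_state_prob_Suc:
  "(\<Sum>s\<in>UNIV. state (Suc t) s0 s * g s) = (\<Sum>s'\<in>UNIV. state t s0 s' * (\<Sum>s\<in>UNIV. K s' s * g s))"
  by (simp add: sum_distrib_left sum_distrib_right mult.assoc) (rule sum.swap)

lemma sum_state_prob: "(\<Sum>s\<in>UNIV. state t s0 s) = 1"
  by (induction t) (use sum_state_prob_Suc[of _ _ "\<lambda>_. 1"] in \<open>simp_all add: sum_pol_kernel\<close>)

lemma state_prob_le_1: "state t s0 s \<le> 1"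
  using member_le_sum[of s UNIV "state t s0"] by (simp add: state_prob_nonneg sum_state_prob)

lemma dT_goal: "dT P pol sg sg = 0"
proof -
  have "(\<lambda>n. real n * hit sg n) = (\<lambda>n. 0)"
    by (rule ext, case_tac n) auto
  then show ?thesis by (simp add: dT_def)
qed

lemma Vfun_goal: "Vfun \<gamma> P pol sg sg = 1"
proof -
  have "(\<lambda>n. \<gamma> ^ n * hit sg n) = (\<lambda>n. if n = 0 then 1 else 0)"
    by (rule ext, case_tac n) auto
  then show ?thesis
    using sums_single[of 0 "\<lambda>_. 1 :: real"] by (simp add: Vfun_def sums_iff)
qed

lemma first_hit_prob_Suc_sums:
  assumes "s \<noteq> sg" and "\<And>s'. (\<lambda>n. w n * hit s' n) sums v s'"
  shows "(\<lambda>n. w n * hit s (Suc n)) sums (\<Sum>s'\<in>UNIV. K s s' * v s')"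
proof -
  have "(\<lambda>n. \<Sum>s'\<in>UNIV. K s s' * (w n * hit s' n)) sums (\<Sum>s'\<in>UNIV. K s s' * v s')"
    by (intro sums_sum sums_mult assms(2))
  then show ?thesis
    using \<open>s \<noteq> sg\<close> by (simp add: sum_distrib_left mult_ac)
qed

lemma dT_Bellman:
  assumes hit_sums: "\<And>s. hit s sums 1"
    and hit_time_summable: "\<And>s. summable (\<lambda>n. real n * hit s n)"
    and "s \<noteq> sg"
  shows "dT P pol sg s = 1 + (\<Sum>s'\<in>UNIV. K s s' * dT P pol sg s')"
proof -
  have "(\<lambda>n. real (Suc n) * hit s' n) sums (dT P pol sg s' + 1)" for s'
    using sums_add[OF summable_sums[OF hit_time_summable] hit_sums]
    by (simp add: dT_def algebra_simps)
  then have "(\<lambda>n. real (Suc n) * hit s (Suc n)) sums (\<Sum>s'\<in>UNIV. K s s' * (dT P pol sg s' + 1))"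
    by (rule first_hit_prob_Suc_sums[OF \<open>s \<noteq> sg\<close>])
  then have "(\<lambda>n. real n * hit s n) sums (\<Sum>s'\<in>UNIV. K s s' * (dT P pol sg s' + 1))"
    using sums_Suc_iff[of "\<lambda>n. real n * hit s n"] by simp
  then show ?thesis
    by (simp add: dT_def sums_iff algebra_simps sum.distrib sum_pol_kernel)
qed

lemma Vfun_sums:
  assumes "summable (hit s)" and "\<bar>\<gamma>\<bar> \<le> 1"
  shows "(\<lambda>n. \<gamma> ^ n * hit s n) sums Vfun \<gamma> P pol sg s"
proof -
  have "summable (\<lambda>n. \<gamma> ^ n * hit s n)"
  proof (rule summable_comparison_test[OF _ assms(1)])
    show "\<exists>N. \<forall>n\<ge>N. norm (\<gamma> ^ n * hit s n) \<le> hit s n"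
      using assms(2) by (auto simp: first_hit_prob_nonneg abs_mult power_abs
          intro!: mult_left_le_one_le power_le_one)
  qed
  then show ?thesis by (simp add: Vfun_def summable_sums)
qed

lemma Vfun_Bellman:
  assumes "\<And>s. summable (hit s)" and "\<bar>\<gamma>\<bar> \<le> 1" and "s \<noteq> sg"
  shows "Vfun \<gamma> P pol sg s = \<gamma> * (\<Sum>s'\<in>UNIV. K s s' * Vfun \<gamma> P pol sg s')"
proof -
  have "(\<lambda>n. \<gamma> ^ Suc n * hit s' n) sums (\<gamma> * Vfun \<gamma> P pol sg s')" for s'
    using sums_mult[OF Vfun_sums[OF assms(1,2)], of \<gamma>] by (simp add: mult.assoc)
  then have "(\<lambda>n. \<gamma> ^ Suc n * hit s (Suc n)) sums (\<Sum>s'\<in>UNIV. K s s' * (\<gamma> * Vfun \<gamma> P pol sg s'))"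
    by (rule first_hit_prob_Suc_sums[OF \<open>s \<noteq> sg\<close>])
  then have "(\<lambda>n. \<gamma> ^ n * hit s n) sums (\<Sum>s'\<in>UNIV. K s s' * (\<gamma> * Vfun \<gamma> P pol sg s'))"
    using sums_Suc_iff[of "\<lambda>n. \<gamma> ^ n * hit s n"] \<open>s \<noteq> sg\<close> by simp
  then show ?thesis
    using Vfun_sums[OF assms(1,2)] by (simp add: sums_iff sum_distrib_left mult_ac)
qed

lemma Bellman_unroll:
  assumes Bellman: "\<And>s. g s = r s + \<gamma> * (\<Sum>s'\<in>UNIV. K s s' * g s')"
  shows "g s0 = (\<Sum>t<N. \<gamma> ^ t * (\<Sum>s\<in>UNIV. state t s0 s * r s))
                + \<gamma> ^ N * (\<Sum>s\<in>UNIV. state N s0 s * g s)"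
proof (induction N)
  case 0
  show ?case by (simp add: of_bool_def[symmetric])
next
  case (Suc N)
  have "(\<Sum>s\<in>UNIV. state N s0 s * g s)
      = (\<Sum>s\<in>UNIV. state N s0 s * (r s + \<gamma> * (\<Sum>s'\<in>UNIV. K s s' * g s')))"
    by (simp only: Bellman[symmetric])
  also have "\<dots> = (\<Sum>s\<in>UNIV. state N s0 s * r s)
      + \<gamma> * (\<Sum>s\<in>UNIV. state N s0 s * (\<Sum>s'\<in>UNIV. K s s' * g s'))"
    by (simp add: algebra_simps sum.distrib sum_distrib_left)
  also have "\<dots> = (\<Sum>s\<in>UNIV. state N s0 s * r s) + \<gamma> * (\<Sum>s\<in>UNIV. state (Suc N) s0 s * g s)"
    by (simp only: sum_state_prob_Suc)
  finally show ?case
    using Suc by (simp add: algebra_simps)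
qed

lemma discounted_reward_sums_Bellman:
  assumes Bellman: "\<And>s. g s = r s + \<gamma> * (\<Sum>s'\<in>UNIV. K s s' * g s')"
    and "0 \<le> \<gamma>" "\<gamma> < 1"
  shows "(\<lambda>t. \<gamma> ^ t * (\<Sum>s\<in>UNIV. state t s0 s * r s)) sums g s0"
proof -
  have bound: "norm (\<gamma> ^ N * (\<Sum>s\<in>UNIV. state N s0 s * g s)) \<le> \<gamma> ^ N * (\<Sum>s\<in>UNIV. \<bar>g s\<bar>)" for N
  proof -
    have "\<bar>\<Sum>s\<in>UNIV. state N s0 s * g s\<bar> \<le> (\<Sum>s\<in>UNIV. \<bar>g s\<bar>)"
      using sum_abs[of "\<lambda>s. state N s0 s * g s" UNIV]
        sum_mono[of UNIV "\<lambda>s. \<bar>state N s0 s * g s\<bar>" "\<lambda>s. \<bar>g s\<bar>"]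
      by (force simp: abs_mult state_prob_nonneg state_prob_le_1 intro: mult_left_le_one_le)
    then show ?thesis
      using \<open>0 \<le> \<gamma>\<close> by (simp add: abs_mult mult_left_mono)
  qed
  have "(\<lambda>N. \<gamma> ^ N * (\<Sum>s\<in>UNIV. \<bar>g s\<bar>)) \<longlonglongrightarrow> 0"
    using assms(2,3) by (intro tendsto_mult_left_zero LIMSEQ_power_zero) simp
  then have "(\<lambda>N. \<gamma> ^ N * (\<Sum>s\<in>UNIV. state N s0 s * g s)) \<longlonglongrightarrow> 0"
    by (rule Lim_null_comparison[OF always_eventually, OF allI, OF bound])
  then have "(\<lambda>N. g s0 - \<gamma> ^ N * (\<Sum>s\<in>UNIV. state N s0 s * g s)) \<longlonglongrightarrow> g s0"
    using tendsto_diff[OF tendsto_const] by fastforce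
  moreover have "(\<Sum>t<N. \<gamma> ^ t * (\<Sum>s\<in>UNIV. state t s0 s * r s))
      = g s0 - \<gamma> ^ N * (\<Sum>s\<in>UNIV. state N s0 s * g s)" for N
    using Bellman_unroll[OF Bellman, of s0 N] by linarith
  ultimately show ?thesis
    unfolding sums_def by simp
qed

lemma occupancy_weighted_sum_Bellman:
  assumes Bellman: "\<And>s. g s = r s + \<gamma> * (\<Sum>s'\<in>UNIV. K s s' * g s')"
    and "0 \<le> \<gamma>" "\<gamma> < 1"
  shows "(\<Sum>s\<in>UNIV. (\<Sum>t. \<gamma> ^ t * state t s0 s) * r s) = g s0"
proof -
  have "summable (\<lambda>t. \<gamma> ^ t * state t s0 s)" for s
  proof (rule summable_comparison_test)
    show "\<exists>N. \<forall>t\<ge>N. norm (\<gamma> ^ t * state t s0 s) \<le> \<gamma> ^ t"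
      using assms(2) by (auto simp: abs_mult state_prob_nonneg state_prob_le_1 intro!: mult_left_le)
    show "summable (\<lambda>t. \<gamma> ^ t)"
      using assms(2,3) by simp
  qed
  then have "(\<lambda>t. \<Sum>s\<in>UNIV. \<gamma> ^ t * state t s0 s * r s) sums (\<Sum>s\<in>UNIV. (\<Sum>t. \<gamma> ^ t * state t s0 s) * r s)"
    by (intro sums_sum sums_mult2 summable_sums)
  then have "(\<lambda>t. \<gamma> ^ t * (\<Sum>s\<in>UNIV. state t s0 s * r s)) sums (\<Sum>s\<in>UNIV. (\<Sum>t. \<gamma> ^ t * state t s0 s) * r s)"
    by (simp add: sum_distrib_left mult.assoc)
  then show ?thesis
    using discounted_reward_sums_Bellman[OF assms] sums_unique2 by blast
qed

lemma dT_Vfun_Bellman: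
  assumes hit_sums: "\<And>s. hit s sums 1"
    and hit_time_summable: "\<And>s. summable (\<lambda>n. real n * hit s n)"
    and "0 \<le> \<gamma>" "\<gamma> < 1"
  defines "g \<equiv> \<lambda>s. dT P pol sg s + \<gamma> / (1 - \<gamma>) * (Vfun \<gamma> P pol sg s - 1)"
  shows "g s = (1 - \<gamma>) * dT P pol sg s + \<gamma> * (\<Sum>s'\<in>UNIV. K s s' * g s')"
proof (cases "s = sg")
  case True
  then show ?thesis
    by (simp add: g_def pol_kernel_goal dT_goal Vfun_goal of_bool_def[symmetric])
next
  case False
  define c where "c = \<gamma> / (1 - \<gamma>)"
  define D where "D = (\<Sum>s'\<in>UNIV. K s s' * dT P pol sg s')"
  define W where "W = (\<Sum>s'\<in>UNIV. K s s' * Vfun \<gamma> P pol sg s')"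
  have c: "\<gamma> * (1 + c) = c"
    using \<open>\<gamma> < 1\<close> by (simp add: c_def field_simps)
  have "(\<Sum>s'\<in>UNIV. K s s' * g s')
      = (\<Sum>s'\<in>UNIV. K s s' * dT P pol sg s' + c * (K s s' * Vfun \<gamma> P pol sg s') - c * K s s')"
    by (simp add: g_def c_def[symmetric] algebra_simps)
  also have "\<dots> = D + c * W - c"
    by (simp add: D_def W_def sum.distrib sum_subtractf sum_pol_kernel flip: sum_distrib_left)
  finally have step: "(\<Sum>s'\<in>UNIV. K s s' * g s') = D + c * W - c" .
  have dT: "dT P pol sg s = 1 + D"
    unfolding D_def by (rule dT_Bellman[OF hit_sums hit_time_summable False])
  have V: "Vfun \<gamma> P pol sg s = \<gamma> * W"
    unfolding W_def using sums_summable[OF hit_sums] \<open>0 \<le> \<gamma>\<close> \<open>\<gamma> < 1\<close>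
    by (intro Vfun_Bellman False) auto
  show ?thesis
    unfolding step using c by (simp add: g_def c_def[symmetric] dT V algebra_simps)
qed

lemma W1_eq_expected_dT_Vfun:
  assumes "\<And>s. hit s sums 1" and "\<And>s. summable (\<lambda>n. real n * hit s n)"
    and "0 \<le> \<gamma>" "\<gamma> < 1"
  shows "W1 \<gamma> P pol rho0 sg
    = (\<Sum>s0\<in>UNIV. pmf rho0 s0 * (dT P pol sg s0 + \<gamma> / (1 - \<gamma>) * (Vfun \<gamma> P pol sg s0 - 1)))"
    (is "_ = ?rhs")
proof -
  have "W1 \<gamma> P pol rho0 sg = (\<Sum>s0\<in>UNIV. pmf rho0 s0 *
      (\<Sum>s\<in>UNIV. (\<Sum>t. \<gamma> ^ t * state t s0 s) * ((1 - \<gamma>) * dT P pol sg s)))"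
    unfolding W1_def visitation_def sum_distrib_right sum_distrib_left
    by (subst sum.swap) (simp add: mult_ac)
  also have "\<dots> = ?rhs"
    using occupancy_weighted_sum_Bellman[OF dT_Vfun_Bellman[OF assms]] assms(3,4) by simp
  finally show ?thesis .
qed

end

theorem proposition3:
  fixes \<gamma> :: real
  assumes "0 \<le> \<gamma>" and "\<gamma> < 1"
  shows "\<exists>h :: real \<Rightarrow> real. strict_mono_on {0..} h \<and>
    (\<forall>(P :: 's::finite \<Rightarrow> 'a \<Rightarrow> 's \<Rightarrow> 's pmf) (pol :: 's \<Rightarrow> 's \<Rightarrow> 'a pmf) (rho0 :: 's pmf) sg.
       (\<forall>s. (\<lambda>n. first_hit_prob P pol sg s n) sums 1 \<and>
            summable (\<lambda>n. real n * first_hit_prob P pol sg s n)) \<longrightarrow>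
       W1 \<gamma> P pol rho0 sg =
         (\<Sum>s0\<in>UNIV. pmf rho0 s0 *
            (h (dT P pol sg s0) + \<gamma> / (1 - \<gamma>) * (jensen_gap \<gamma> P pol sg s0 - 1))))"
proof (intro exI conjI allI impI)
  show "strict_mono_on {0..} (\<lambda>x. x + \<gamma> / (1 - \<gamma>) * \<gamma> powr x)"
    using assms by (rule strict_mono_on_add_scaled_powr)
  fix P :: "'s \<Rightarrow> 'a \<Rightarrow> 's \<Rightarrow> 's pmf" and pol rho0 sg
  assume "\<forall>s. (\<lambda>n. first_hit_prob P pol sg s n) sums 1 \<and>
            summable (\<lambda>n. real n * first_hit_prob P pol sg s n)"
  then have "W1 \<gamma> P pol rho0 sg = (\<Sum>s0\<in>UNIV. pmf rho0 s0 *
      (dT P pol sg s0 + \<gamma> / (1 - \<gamma>) * (Vfun \<gamma> P pol sg s0 - 1)))"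
    using assms by (intro W1_eq_expected_dT_Vfun) auto
  then show "W1 \<gamma> P pol rho0 sg = (\<Sum>s0\<in>UNIV. pmf rho0 s0 *
      ((\<lambda>x. x + \<gamma> / (1 - \<gamma>) * \<gamma> powr x) (dT P pol sg s0)
        + \<gamma> / (1 - \<gamma>) * (jensen_gap \<gamma> P pol sg s0 - 1)))"
    by (simp add: jensen_gap_def algebra_simps)
qed

end
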